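(* Let $T$ be a chain all of whose entries lie in $\{1,2\}$, which contains the chain $[212]$, and which is not equal to $[212]$ itself. Then $\mathcal{Z}(T)\le\tfrac13$.
   Context: A chain is a finite sequence $T=[a_1a_2\dots a_n]$ of positive integers ($n\ge1$). For a chain $S=[s_1\dots s_m]$ write $\rho_S=[0;s_1,\dots,s_m]$ (with $\rho_\emptyset=0$ for the empty chain), and $[s_1;s_2,\dots,s_m]$ for the finite continued fraction, which equals $1/\rho_S$. Define $\mathcal{Z}(T)=\big(\max_{1\le i\le n}([a_i;a_{i+1},\dots,a_n]+[0;a_{i-1},\dots,a_1])\big)^{-1}$, where for $i=1$ the second summand is $0$. A chain contains the chain $[c_1\dots c_k]$ if it has consecutive entries $c_1,\dots,c_k$. *)

theory Defs
  imports Complex_Main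
begin

text \<open>Chains are lists of positive integers (as natural numbers).
  rho S = [0; s_1, ..., s_m], with rho [] = 0.\<close>

fun rho :: "nat list \<Rightarrow> real" where
  "rho [] = 0"
| "rho (s # ss) = 1 / (real s + rho ss)"

fun cf :: "nat list \<Rightarrow> real" where
  "cf [] = 0"
| "cf (s # ss) = real s + rho ss"

definition is_chain :: "nat list \<Rightarrow> bool" where
  "is_chain T \<longleftrightarrow> T \<noteq> [] \<and> (\<forall>a\<in>set T. 0 < a)"

text \<open>For 1-based index i, the term [a_i; a_{i+1},...,a_n] + [0; a_{i-1},...,a_1].
  With 0-based k = i - 1: cf (drop k T) + rho (rev (take k T)).\<close>
definition Zval :: "nat list \<Rightarrow> real" where
  "Zval T = inverse (Max {cf (drop k T) + rho (rev (take k T)) | k. k < length T})"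

definition contains :: "nat list \<Rightarrow> nat list \<Rightarrow> bool" where
  "contains T C \<longleftrightarrow> (\<exists>u v. T = u @ C @ v)"

end

theory Submission
  imports Defs
begin

text \<open>Around an occurrence \<open>u @ [2,1,2] @ v\<close>, look at the position of the last \<open>2\<close> if \<open>v\<close> is
  nonempty, and of the first \<open>2\<close> otherwise (then \<open>u\<close> is nonempty). The summand there is
  \<open>2 + [0;1,2,\<dots>] + [0;w]\<close> for a nonempty chain \<open>w\<close> with entries in \<open>{1,2}\<close>; since
  \<open>[0;1,2,\<dots>] \<ge> 2/3\<close> and \<open>[0;w] \<ge> 1/3\<close>, the maximum is at least \<open>3\<close>.\<close>

lemma rho_nonneg: "0 \<le> rho w"
  by (induction w) auto

lemma rho_le_1:
  assumes "\<forall>a\<in>set w. 0 < a"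
  shows "rho w \<le> 1"
proof (cases w)
  case (Cons a w')
  with assms have "1 \<le> real a + rho w'"
    using rho_nonneg[of w'] by auto
  then show ?thesis
    using Cons by (simp add: field_simps)
qed simp

lemma rho_ge_inverse_bound:
  assumes "w \<noteq> []" and "\<forall>a\<in>set w. 0 < a \<and> a \<le> m"
  shows "1 / (real m + 1) \<le> rho w"
proof -
  obtain a w' where w: "w = a # w'"
    using assms(1) by (cases w) auto
  have "0 < real a + rho w'"
    using assms(2) w rho_nonneg[of w'] by auto
  moreover have "real a + rho w' \<le> real m + 1"
    using assms(2) w rho_le_1[of w'] by auto
  ultimately show ?thesis
    using w by (simp add: frac_le)
qed

lemma rho_one_two_ge: "2 / 3 \<le> rho (1 # 2 # w)"
proof -
  define y where "y = rho (2 # w)"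
  have "y \<le> 1 / 2" and "0 \<le> y"
    unfolding y_def using rho_nonneg[of w] by (simp_all add: field_simps)
  then have "2 / 3 \<le> 1 / (1 + y)"
    by (simp add: field_simps)
  then show ?thesis
    unfolding y_def by simp
qed

lemma Zval_le_inverse:
  assumes "k < length T" and "0 < c"
    and "c \<le> cf (drop k T) + rho (rev (take k T))"
  shows "Zval T \<le> inverse c"
proof -
  define S where "S = {cf (drop k T) + rho (rev (take k T)) | k. k < length T}"
  have "finite S"
    unfolding S_def by simp
  moreover have "cf (drop k T) + rho (rev (take k T)) \<in> S"
    unfolding S_def using assms(1) by blast
  ultimately have "c \<le> Max S"
    using assms(3) Max_ge order_trans by blast
  then have "inverse (Max S) \<le> inverse c"
    using assms(2) by (rule le_imp_inverse_le)
  then show ?thesis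
    unfolding Zval_def S_def .
qed

theorem lemma3p2:
  fixes T :: "nat list"
  assumes "is_chain T"
    and "\<forall>a\<in>set T. a \<in> {1, 2}"
    and "contains T [2, 1, 2]"
    and "T \<noteq> [2, 1, 2]"
  shows "Zval T \<le> 1 / 3"
proof -
  obtain u v where T: "T = u @ [2, 1, 2] @ v"
    using assms(3) unfolding contains_def by blast
  have "\<forall>a\<in>set T. 0 < a \<and> a \<le> 2"
    using assms(2) by auto
  then have entries: "\<forall>a\<in>set (rev u) \<union> set v. 0 < a \<and> a \<le> 2"
    using T by simp
  have "Zval T \<le> inverse 3"
  proof (cases "v = []")
    case True
    with T assms(4) have "rev u \<noteq> []" by auto
    then have "1 / 3 \<le> rho (rev u)"
      using rho_ge_inverse_bound[of "rev u" 2] entries by auto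
    moreover have "drop (length u) T = [2, 1, 2]" and "take (length u) T = u"
      using T True by simp_all
    ultimately have "3 \<le> cf (drop (length u) T) + rho (rev (take (length u) T))"
      using rho_one_two_ge[of "[]"] by simp
    then show ?thesis
      using T by (intro Zval_le_inverse[of "length u"]) simp_all
  next
    case False
    then have "1 / 3 \<le> rho v"
      using rho_ge_inverse_bound[of v 2] entries by auto
    moreover have "drop (length u + 2) T = 2 # v" and "take (length u + 2) T = u @ [2, 1]"
      using T by simp_all
    ultimately have "3 \<le> cf (drop (length u + 2) T) + rho (rev (take (length u + 2) T))"
      using rho_one_two_ge[of "rev u"] by simp
    then show ?thesis
      using T by (intro Zval_le_inverse[of "length u + 2"]) simp_all
  qed
  then show ?thesis
    by (simp add: inverse_eq_divide)
qed

end
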